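(* There exists $\epsilon_0>0$ such that the following holds for every fixed $\epsilon\in(0,\epsilon_0)$. Let $(G_n)$ be a sequence of graphs, where $G_n$ has $n$ vertices and is $d$-regular for some $d=d(n)\ge 1$, and let $p=\frac{1-\epsilon}{d}$. Then, with probability tending to one as $n\to\infty$, every connected component of $(G_n)_p$ has at most $\frac{9\log n}{\epsilon^2}$ vertices.
   Context: For a graph $G$ and $p\in[0,1]$, $G_p$ denotes the random spanning subgraph of $G$ obtained by retaining each edge of $G$ independently with probability $p$ (bond percolation). $\log$ is the natural logarithm. *)

theory Defs
  imports "HOL-Probability.Probability"
begin

definition simple_graph :: "'a set \<Rightarrow> 'a set set \<Rightarrow> bool" where
  "simple_graph V E \<longleftrightarrow> finite V \<and> (\<forall>e\<in>E. \<exists>u v. e = {u, v} \<and> u \<noteq> v \<and> u \<in> V \<and> v \<in> V)"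

definition degree :: "'a set set \<Rightarrow> 'a \<Rightarrow> nat" where
  "degree E v = card {e\<in>E. v \<in> e}"

definition regular_graph :: "'a set \<Rightarrow> 'a set set \<Rightarrow> nat \<Rightarrow> bool" where
  "regular_graph V E d \<longleftrightarrow> simple_graph V E \<and> (\<forall>v\<in>V. degree E v = d)"

definition percolation :: "'a set set \<Rightarrow> real \<Rightarrow> 'a set set pmf" where
  "percolation E p = map_pmf (\<lambda>f. {e\<in>E. f e}) (Pi_pmf E False (\<lambda>_. bernoulli_pmf p))"

definition component :: "'a set set \<Rightarrow> 'a \<Rightarrow> 'a set" where
  "component F v = {u. (v, u) \<in> {(x, y). {x, y} \<in> F}\<^sup>*}"

end

theory Submission
  imports Defs "HOL-Real_Asymp.Real_Asymp"
begin

text \<open>Explore the component of a vertex set U one vertex u at a time: reveal the at most d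
  edges at u, each retained with probability p, delete u and add its retained neighbours to
  the set still to be explored. For x = exp(\<epsilon>^2/4) and \<phi> = 1 + \<epsilon>/2 one has
  x (1 - p + p \<phi>)^d \<le> \<phi>, so induction along the exploration gives
  E[x^|C(U)|] \<le> \<phi>^|U|. Markov's inequality and a union bound over the n vertices bound
  the probability of a component with more than 9 log n / \<epsilon>^2 vertices by
  n \<phi> / n^(9/4), which tends to 0.\<close>

definition reach :: "'a set set \<Rightarrow> 'a set \<Rightarrow> 'a set" where
  "reach F U = {y. \<exists>u\<in>U. (u, y) \<in> {(a, b). {a, b} \<in> F}\<^sup>*}"

definition neighbours :: "'a set set \<Rightarrow> 'a \<Rightarrow> 'a set" where
  "neighbours F u = {w. {u, w} \<in> F}"

definition perc_weight :: "real \<Rightarrow> 'a set \<Rightarrow> 'a set \<Rightarrow> real" where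
  "perc_weight p E F = p ^ card F * (1 - p) ^ card (E - F)"

subsection \<open>Percolation as a finite sum\<close>

lemma perc_weight_nonneg: "0 \<le> p \<Longrightarrow> p \<le> 1 \<Longrightarrow> 0 \<le> perc_weight p E F"
  unfolding perc_weight_def by simp

lemma sum_perc_weight_power:
  assumes "finite E"
  shows "(\<Sum>F\<in>Pow E. perc_weight p E F * \<phi> ^ card F) = (1 - p + p * \<phi>) ^ card E"
proof -
  have "(\<Prod>x\<in>E. p * \<phi> + (1 - p)) = (\<Sum>X\<in>Pow E. (\<Prod>x\<in>X. p * \<phi>) * (\<Prod>x\<in>E-X. 1 - p))"
    by (rule prod_add[OF assms])
  also have "\<dots> = (\<Sum>F\<in>Pow E. perc_weight p E F * \<phi> ^ card F)"
    by (intro sum.cong refl) (simp add: perc_weight_def power_mult_distrib)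
  finally show ?thesis by (simp add: add.commute)
qed

lemma perc_weight_Un:
  assumes "finite E" "D \<subseteq> E" "A \<subseteq> D" "B \<subseteq> E - D"
  shows "perc_weight p E (A \<union> B) = perc_weight p D A * perc_weight p (E - D) B"
proof -
  have fin: "finite D" "finite A" "finite B"
    using assms by (meson finite_Diff finite_subset)+
  have "card (A \<union> B) = card A + card B"
    using fin assms by (intro card_Un_disjoint) auto
  moreover have "card (E - (A \<union> B)) = card (D - A) + card ((E - D) - B)"
  proof -
    have "E - (A \<union> B) = (D - A) \<union> ((E - D) - B)" using assms by auto
    moreover have "finite (D - A)" "finite ((E - D) - B)" "(D - A) \<inter> ((E - D) - B) = {}"
      using fin assms by auto
    ultimately show ?thesis by (simp add: card_Un_disjoint)
  qed
  ultimately show ?thesis unfolding perc_weight_def by (simp add: power_add algebra_simps)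
qed

lemma sum_perc_weight_split:
  assumes "finite E" "D \<subseteq> E"
  shows "(\<Sum>F\<in>Pow E. perc_weight p E F * h F) =
         (\<Sum>A\<in>Pow D. \<Sum>B\<in>Pow (E - D). perc_weight p D A * perc_weight p (E - D) B * h (A \<union> B))"
proof -
  have bij: "bij_betw (\<lambda>(A, B). A \<union> B) (Pow D \<times> Pow (E - D)) (Pow E)"
    by (rule bij_betw_byWitness[where f' = "\<lambda>F. (F \<inter> D, F - D)"]) (use assms in auto)
  have "(\<Sum>F\<in>Pow E. perc_weight p E F * h F) =
        (\<Sum>(A, B)\<in>Pow D \<times> Pow (E - D). perc_weight p E (A \<union> B) * h (A \<union> B))"
    by (subst sum.reindex_bij_betw[OF bij, symmetric]) (simp add: case_prod_beta)
  also have "\<dots> = (\<Sum>(A, B)\<in>Pow D \<times> Pow (E - D).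
                     perc_weight p D A * perc_weight p (E - D) B * h (A \<union> B))"
    using assms by (intro sum.cong refl) (auto simp: perc_weight_Un)
  finally show ?thesis by (simp add: sum.cartesian_product)
qed

lemma pmf_percolation:
  assumes "finite E" "0 \<le> p" "p \<le> 1" "F \<subseteq> E"
  shows "pmf (percolation E p) F = perc_weight p E F"
proof -
  let ?M = "Pi_pmf E False (\<lambda>_. bernoulli_pmf p)"
  let ?f = "\<lambda>e. e \<in> F"
  have "f = ?f" if "f \<in> set_pmf ?M" "{e\<in>E. f e} = F" for f
    using that set_Pi_pmf_subset[OF assms(1), of False "\<lambda>_. bernoulli_pmf p"] by auto
  then have preimage: "(\<lambda>f. {e\<in>E. f e}) -` {F} \<inter> set_pmf ?M = {?f} \<inter> set_pmf ?M"
    using assms(4) by auto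
  have "pmf (percolation E p) F = measure ?M ((\<lambda>f. {e\<in>E. f e}) -` {F} \<inter> set_pmf ?M)"
    unfolding percolation_def pmf_map by (simp add: measure_Int_set_pmf)
  also have "\<dots> = pmf ?M ?f"
    unfolding preimage by (simp add: measure_Int_set_pmf measure_pmf_single)
  also have "\<dots> = (\<Prod>e\<in>E. pmf (bernoulli_pmf p) (e \<in> F))"
    using assms by (intro pmf_Pi') auto
  also have "\<dots> = (\<Prod>e\<in>E - F. pmf (bernoulli_pmf p) (e \<in> F)) * (\<Prod>e\<in>F. pmf (bernoulli_pmf p) (e \<in> F))"
    using assms by (intro prod.subset_diff)
  also have "\<dots> = perc_weight p E F"
    using assms by (simp add: perc_weight_def)
  finally show ?thesis .
qed

lemma prob_percolation:
  assumes "finite E" "0 \<le> p" "p \<le> 1"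
  shows "measure_pmf.prob (percolation E p) S = (\<Sum>F\<in>Pow E \<inter> S. perc_weight p E F)"
proof -
  have "set_pmf (percolation E p) \<subseteq> Pow E"
    unfolding percolation_def by auto
  then have "S \<inter> set_pmf (percolation E p) = (Pow E \<inter> S) \<inter> set_pmf (percolation E p)"
    by auto
  then have "measure_pmf.prob (percolation E p) S = measure_pmf.prob (percolation E p) (Pow E \<inter> S)"
    by (metis measure_Int_set_pmf)
  also have "\<dots> = (\<Sum>F\<in>Pow E \<inter> S. pmf (percolation E p) F)"
    using assms by (intro measure_measure_pmf_finite) auto
  finally show ?thesis
    using assms by (simp add: pmf_percolation)
qed

lemma component_eq_reach: "component F v = reach F {v}"
  by (simp add: component_def reach_def)

lemma reach_empty [simp]: "reach F {} = {}"
  by (simp add: reach_def)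

lemma reach_subset: "reach F U \<subseteq> U \<union> \<Union>F"
proof
  fix y assume "y \<in> reach F U"
  then obtain u where u: "u \<in> U" "(u, y) \<in> {(a, b). {a, b} \<in> F}\<^sup>*"
    by (auto simp: reach_def)
  from u(2) show "y \<in> U \<union> \<Union>F"
    by (cases rule: rtranclE) (use u(1) in auto)
qed

lemma finite_reach: "finite U \<Longrightarrow> finite F \<Longrightarrow> \<forall>e\<in>F. finite e \<Longrightarrow> finite (reach F U)"
  using reach_subset[of F U] by (meson finite_Union finite_UnI finite_subset)

lemma finite_neighbours: "finite A \<Longrightarrow> finite (neighbours A u)"
  and card_neighbours_le: "finite A \<Longrightarrow> card (neighbours A u) \<le> card A"
proof -
  assume "finite A"
  moreover have "inj_on (\<lambda>w. {u, w}) (neighbours A u)"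
    by (auto simp: inj_on_def doubleton_eq_iff)
  moreover have "(\<lambda>w. {u, w}) ` neighbours A u \<subseteq> A"
    by (auto simp: neighbours_def)
  ultimately show "finite (neighbours A u)" "card (neighbours A u) \<le> card A"
    by (meson card_inj_on_le finite_imageD finite_subset)+
qed

lemma reach_explore_vertex:
  assumes "u \<in> U" "\<forall>e\<in>A. u \<in> e" "\<forall>e\<in>B. u \<notin> e"
  shows "reach (A \<union> B) U \<subseteq> insert u (reach B ((U - {u}) \<union> neighbours A u))"
proof
  let ?W = "(U - {u}) \<union> neighbours A u"
  fix y assume "y \<in> reach (A \<union> B) U"
  then obtain u' where u': "u' \<in> U" "(u', y) \<in> {(a, b). {a, b} \<in> A \<union> B}\<^sup>*"
    by (auto simp: reach_def)
  from u'(2) show "y \<in> insert u (reach B ?W)"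
  proof (induction rule: rtrancl_induct)
    case base
    show ?case using u'(1) by (cases "u' = u") (auto simp: reach_def)
  next
    case (step y z)
    show ?case
    proof (cases "{y, z} \<in> A")
      case True
      then have "z = u \<or> z \<in> ?W"
        using assms(2) by (auto simp: neighbours_def insert_commute)
      then show ?thesis by (auto simp: reach_def)
    next
      case False
      with step.hyps have yz: "{y, z} \<in> B" by auto
      with assms(3) step.IH obtain w where "w \<in> ?W" "(w, y) \<in> {(a, b). {a, b} \<in> B}\<^sup>*"
        by (auto simp: reach_def)
      with yz show ?thesis
        by (auto simp: reach_def intro: rtrancl_into_rtrancl)
    qed
  qed
qed

lemma card_reach_explore_le:
  assumes "u \<in> U" "\<forall>e\<in>A. u \<in> e" "\<forall>e\<in>B. u \<notin> e"
    and "finite U" "finite A" "finite B" "\<forall>e\<in>B. finite e"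
  shows "card (reach (A \<union> B) U) \<le> Suc (card (reach B ((U - {u}) \<union> neighbours A u)))"
proof -
  let ?R = "reach B ((U - {u}) \<union> neighbours A u)"
  have R: "finite ?R"
    using assms(4-7) by (intro finite_reach) (auto simp: finite_neighbours)
  then have "card (reach (A \<union> B) U) \<le> card (insert u ?R)"
    using reach_explore_vertex[OF assms(1-3)] by (intro card_mono) auto
  also have "\<dots> \<le> Suc (card ?R)"
    using R by (simp add: card_insert_if)
  finally show ?thesis .
qed

subsection \<open>The exponential moment of the size of a reachable set\<close>

lemma degree_mono: "finite E \<Longrightarrow> E' \<subseteq> E \<Longrightarrow> degree E' v \<le> degree E v"
  unfolding degree_def by (intro card_mono) auto

lemma sum_perc_weight_neighbours_le:
  fixes p \<phi> :: real
  assumes "0 \<le> p" "p \<le> 1" "1 \<le> \<phi>" "finite D"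
  shows "(\<Sum>A\<in>Pow D. perc_weight p D A * \<phi> ^ card (W \<union> neighbours A u))
           \<le> \<phi> ^ card W * (1 - p + p * \<phi>) ^ card D"
proof -
  have "\<phi> ^ card (W \<union> neighbours A u) \<le> \<phi> ^ card W * \<phi> ^ card A" if "A \<subseteq> D" for A
  proof -
    have "card (W \<union> neighbours A u) \<le> card W + card A"
      using card_Un_le[of W "neighbours A u"] card_neighbours_le[of A u] that assms(4)
      by (meson add_left_mono finite_subset le_trans)
    then show ?thesis
      using assms(3) by (simp add: power_add[symmetric] power_increasing)
  qed
  then have "(\<Sum>A\<in>Pow D. perc_weight p D A * \<phi> ^ card (W \<union> neighbours A u))
           \<le> (\<Sum>A\<in>Pow D. perc_weight p D A * (\<phi> ^ card W * \<phi> ^ card A))"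
    using assms by (intro sum_mono mult_left_mono) (auto simp: perc_weight_nonneg)
  also have "\<dots> = \<phi> ^ card W * (\<Sum>A\<in>Pow D. perc_weight p D A * \<phi> ^ card A)"
    by (simp add: sum_distrib_left mult_ac)
  also have "\<dots> = \<phi> ^ card W * (1 - p + p * \<phi>) ^ card D"
    using assms(4) by (simp add: sum_perc_weight_power)
  finally show ?thesis .
qed

lemma exp_moment_reach_le:
  fixes p x \<phi> :: real
  assumes p: "0 \<le> p" "p \<le> 1" and x: "1 \<le> x" and \<phi>: "1 \<le> \<phi>"
    and moment: "x * (1 - p + p * \<phi>) ^ d \<le> \<phi>"
    and "finite E" "\<forall>e\<in>E. finite e" "\<forall>v. degree E v \<le> d" "finite U"
  shows "(\<Sum>F\<in>Pow E. perc_weight p E F * x ^ card (reach F U)) \<le> \<phi> ^ card U"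
  using assms(6-9)
  \<comment> \<open>Exploring u \<in> U removes u from U and the edges at u from E, and adds to U at most
    one vertex per retained edge at u; the factor x pays for u itself.\<close>
proof (induction "card E + card U" arbitrary: E U rule: less_induct)
  case less
  show ?case
  proof (cases "U = {}")
    case True
    then show ?thesis using sum_perc_weight_power[OF \<open>finite E\<close>, of p 1] by simp
  next
    case False
    then obtain u where u: "u \<in> U" by auto
    define D where "D = {e\<in>E. u \<in> e}"
    define U' where "U' = U - {u}"
    have fin: "finite D" "finite (E - D)" "finite U'"
      using less.prems by (auto simp: D_def U'_def)
    have D: "D \<subseteq> E" "card D \<le> d"
      using less.prems(3) by (auto simp: D_def degree_def)
    have card_U: "card U = Suc (card U')"
      using card_Suc_Diff1[OF less.prems(4) u] by (simp add: U'_def)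
    have IH: "(\<Sum>B\<in>Pow (E - D). perc_weight p (E - D) B * x ^ card (reach B (U' \<union> neighbours A u)))
                \<le> \<phi> ^ card (U' \<union> neighbours A u)" if "A \<subseteq> D" for A
    proof (rule less.hyps)
      have "card (U' \<union> neighbours A u) \<le> card U' + card D"
        using card_Un_le[of U' "neighbours A u"] card_neighbours_le[of A u]
          card_mono[OF fin(1) that] finite_subset[OF that fin(1)] by linarith
      then show "card (E - D) + card (U' \<union> neighbours A u) < card E + card U"
        using card_U card_Diff_subset[OF fin(1) D(1)] card_mono[OF less.prems(1) D(1)] by linarith
      show "\<forall>v. degree (E - D) v \<le> d"
        using less.prems(1,3) degree_mono[of E "E - D"] le_trans by blast
      show "finite (U' \<union> neighbours A u)"
        using fin that by (simp add: finite_neighbours finite_subset)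
    qed (use fin less.prems(2) in auto)
    have explore: "x ^ card (reach (A \<union> B) U) \<le> x * x ^ card (reach B (U' \<union> neighbours A u))"
      if "A \<subseteq> D" "B \<subseteq> E - D" for A B
    proof -
      have "card (reach (A \<union> B) U) \<le> Suc (card (reach B (U' \<union> neighbours A u)))"
        unfolding U'_def using that fin less.prems(2,4)
        by (intro card_reach_explore_le[OF u]) (auto simp: D_def finite_subset)
      then have "x ^ card (reach (A \<union> B) U) \<le> x ^ Suc (card (reach B (U' \<union> neighbours A u)))"
        by (rule power_increasing[OF _ x])
      then show ?thesis by simp
    qed
    have "(\<Sum>F\<in>Pow E. perc_weight p E F * x ^ card (reach F U)) =
          (\<Sum>A\<in>Pow D. \<Sum>B\<in>Pow (E - D).
             perc_weight p D A * perc_weight p (E - D) B * x ^ card (reach (A \<union> B) U))"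
      using less.prems(1) D(1) by (rule sum_perc_weight_split)
    also have "\<dots> \<le> (\<Sum>A\<in>Pow D. \<Sum>B\<in>Pow (E - D). perc_weight p D A * perc_weight p (E - D) B
                       * (x * x ^ card (reach B (U' \<union> neighbours A u))))"
      using p by (intro sum_mono mult_left_mono explore) (auto intro: mult_nonneg_nonneg perc_weight_nonneg)
    also have "\<dots> = x * (\<Sum>A\<in>Pow D. perc_weight p D A * (\<Sum>B\<in>Pow (E - D).
                       perc_weight p (E - D) B * x ^ card (reach B (U' \<union> neighbours A u))))"
      by (simp add: sum_distrib_left mult_ac)
    also have "\<dots> \<le> x * (\<Sum>A\<in>Pow D. perc_weight p D A * \<phi> ^ card (U' \<union> neighbours A u))"
      using p x by (intro mult_left_mono sum_mono IH) (auto intro: perc_weight_nonneg)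
    also have "\<dots> \<le> x * (\<phi> ^ card U' * (1 - p + p * \<phi>) ^ card D)"
      using p \<phi> x fin by (intro mult_left_mono sum_perc_weight_neighbours_le) auto
    also have "\<dots> \<le> x * (\<phi> ^ card U' * (1 - p + p * \<phi>) ^ d)"
      using p \<phi> x D(2) mult_left_mono[of 1 \<phi> p]
      by (intro mult_left_mono power_increasing) auto
    also have "\<dots> = \<phi> ^ card U' * (x * (1 - p + p * \<phi>) ^ d)"
      by (simp only: mult_ac)
    also have "\<dots> \<le> \<phi> ^ card U' * \<phi>"
      using moment \<phi> by (intro mult_left_mono) auto
    also have "\<dots> = \<phi> ^ card U"
      using card_U by simp
    finally show ?thesis .
  qed
qed

lemma prob_small_components_ge:
  fixes p x \<phi> t :: real
  assumes p: "0 \<le> p" "p \<le> 1" and x: "1 \<le> x" and \<phi>: "1 \<le> \<phi>"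
    and moment: "x * (1 - p + p * \<phi>) ^ d \<le> \<phi>"
    and E: "finite E" "\<forall>e\<in>E. finite e" "\<forall>v. degree E v \<le> d" and "finite V"
  shows "1 - real (card V) * \<phi> / x powr t \<le>
    measure_pmf.prob (percolation E p) {F. \<forall>v\<in>V. real (card (component F v)) \<le> t}"
proof -
  define S where "S = {F. \<forall>v\<in>V. real (card (component F v)) \<le> t}"
  define h where "h F = (\<Sum>v\<in>V. x ^ card (reach F {v})) / x powr t" for F
  have large: "1 \<le> h F" if "F \<notin> S" for F
  proof -
    obtain v where v: "v \<in> V" "t < real (card (reach F {v}))"
      using \<open>F \<notin> S\<close> by (auto simp: S_def component_eq_reach not_le)
    then have "x powr t \<le> x ^ card (reach F {v})"
      using x powr_mono[of t "card (reach F {v})" x] by (simp add: powr_realpow)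
    also have "\<dots> \<le> (\<Sum>v\<in>V. x ^ card (reach F {v}))"
      using v(1) x \<open>finite V\<close> by (intro member_le_sum) auto
    finally show ?thesis
      using x by (simp add: h_def)
  qed
  have "1 - measure_pmf.prob (percolation E p) S = (\<Sum>F\<in>Pow E - S. perc_weight p E F)"
    using measure_pmf.prob_compl[of S "percolation E p"] prob_percolation[OF E(1) p, of "UNIV - S"]
    by (simp add: Diff_eq)
  also have "\<dots> \<le> (\<Sum>F\<in>Pow E - S. perc_weight p E F * h F)"
  proof (intro sum_mono)
    fix F assume "F \<in> Pow E - S"
    then have "1 \<le> h F"
      using large by simp
    then show "perc_weight p E F \<le> perc_weight p E F * h F"
      using mult_left_mono[OF _ perc_weight_nonneg[OF p]] by fastforce
  qed
  also have "\<dots> \<le> (\<Sum>F\<in>Pow E. perc_weight p E F * h F)"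
    using p x E(1) by (intro sum_mono2) (auto simp: h_def perc_weight_nonneg sum_nonneg)
  also have "\<dots> = (\<Sum>v\<in>V. \<Sum>F\<in>Pow E. perc_weight p E F * x ^ card (reach F {v})) / x powr t"
    by (simp add: h_def sum_distrib_left sum_divide_distrib sum.swap[of _ "Pow E"])
  also have "\<dots> \<le> real (card V) * \<phi> / x powr t"
  proof (rule divide_right_mono)
    have "(\<Sum>v\<in>V. \<Sum>F\<in>Pow E. perc_weight p E F * x ^ card (reach F {v})) \<le> (\<Sum>v\<in>V. \<phi>)"
      using exp_moment_reach_le[OF p x \<phi> moment E, of "{_}"] by (intro sum_mono) simp
    then show "(\<Sum>v\<in>V. \<Sum>F\<in>Pow E. perc_weight p E F * x ^ card (reach F {v})) \<le> real (card V) * \<phi>"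
      by simp
  qed (use x in simp)
  finally show ?thesis
    by (simp add: S_def)
qed

lemma regular_graph_edges:
  assumes "regular_graph V E d"
  shows "finite E" "\<forall>e\<in>E. finite e" "\<forall>v. degree E v \<le> d"
proof -
  have "finite V" "E \<subseteq> Pow V"
    using assms by (auto simp: regular_graph_def simple_graph_def)
  then show "finite E" "\<forall>e\<in>E. finite e"
    by (auto intro: finite_subset)
  show "\<forall>v. degree E v \<le> d"
  proof
    fix v
    show "degree E v \<le> d"
    proof (cases "v \<in> V")
      case False
      then have "{e\<in>E. v \<in> e} = {}" using \<open>E \<subseteq> Pow V\<close> by blast
      then show ?thesis unfolding degree_def by (metis card.empty le0)
    qed (use assms in \<open>simp add: regular_graph_def\<close>)
  qed
qed

lemma subcritical_moment_bound:
  fixes \<epsilon> p :: real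
  assumes e: "0 < \<epsilon>" "\<epsilon> < 1/2" and p: "0 \<le> p" "real d * p = 1 - \<epsilon>"
  shows "exp (\<epsilon>\<^sup>2/4) * (1 - p + p * (1 + \<epsilon>/2)) ^ d \<le> 1 + \<epsilon>/2"
proof -
  have "(1 - p + p * (1 + \<epsilon>/2)) ^ d = (1 + p * \<epsilon>/2) ^ d"
    by (simp add: algebra_simps)
  also have "\<dots> \<le> exp (p * \<epsilon>/2) ^ d"
    using p e exp_ge_add_one_self[of "p * \<epsilon>/2"] by (intro power_mono) (auto simp: add.commute)
  also have "\<dots> = exp ((1 - \<epsilon>) * \<epsilon> / 2)"
    by (simp add: exp_of_nat_mult[symmetric] p(2)[symmetric] mult_ac)
  finally have "exp (\<epsilon>\<^sup>2/4) * (1 - p + p * (1 + \<epsilon>/2)) ^ d \<le> exp (\<epsilon>\<^sup>2/4 + (1 - \<epsilon>) * \<epsilon> / 2)"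
    by (simp add: exp_add)
  also have "\<dots> \<le> exp (ln (1 + \<epsilon>/2))"
  proof -
    have "\<epsilon>/2 - (\<epsilon>/2)\<^sup>2 \<le> ln (1 + \<epsilon>/2)"
      using e by (intro ln_one_plus_pos_lower_bound) auto
    then show ?thesis
      by (simp add: power2_eq_square field_simps)
  qed
  finally show ?thesis
    using e by simp
qed

lemma prob_small_components_regular_ge:
  fixes \<epsilon> :: real
  assumes "regular_graph {0..<n} E d" "d \<ge> 1" "0 < \<epsilon>" "\<epsilon> < 1/2" "n \<ge> 1"
  shows "1 - (1 + \<epsilon>/2) * real n / real n powr (9/4) \<le>
    measure_pmf.prob (percolation E ((1 - \<epsilon>) / real d))
      {F. \<forall>v\<in>{0..<n}. real (card (component F v)) \<le> 9 * ln (real n) / \<epsilon>\<^sup>2}"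
proof -
  define p where "p = (1 - \<epsilon>) / real d"
  have p: "0 \<le> p" "p \<le> 1" "real d * p = 1 - \<epsilon>"
    using assms by (auto simp: p_def field_simps)
  have "exp (\<epsilon>\<^sup>2/4) powr (9 * ln (real n) / \<epsilon>\<^sup>2) = real n powr (9/4)"
    using assms by (simp add: powr_def)
  then show ?thesis
    using prob_small_components_ge[OF p(1,2) _ _ subcritical_moment_bound[OF assms(3,4) p(1,3)]
        regular_graph_edges[OF assms(1)], of "{0..<n}" "9 * ln (real n) / \<epsilon>\<^sup>2"] assms(3)
    by (simp add: p_def mult.commute)
qed

theorem mainTheorem1:
  shows "\<exists>\<epsilon>0::real. \<epsilon>0 > 0 \<and>
    (\<forall>\<epsilon>::real. 0 < \<epsilon> \<and> \<epsilon> < \<epsilon>0 \<longrightarrow>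
      (\<forall>(N :: nat \<Rightarrow> nat) (d :: nat \<Rightarrow> nat) (G :: nat \<Rightarrow> nat set set).
         filterlim N at_top sequentially \<and>
         (\<forall>k. d k \<ge> 1 \<and> regular_graph {0..<N k} (G k) (d k)) \<longrightarrow>
         ((\<lambda>k. measure_pmf.prob (percolation (G k) ((1 - \<epsilon>) / real (d k)))
                 {F. \<forall>v\<in>{0..<N k}. real (card (component F v)) \<le> 9 * ln (real (N k)) / \<epsilon>\<^sup>2})
           \<longlonglongrightarrow> 1)))"
proof (intro exI[of _ "1/2"] conjI allI impI)
  fix \<epsilon> :: real and N d and G :: "nat \<Rightarrow> nat set set"
  assume e: "0 < \<epsilon> \<and> \<epsilon> < 1/2"
    and G: "filterlim N at_top sequentially \<and> (\<forall>k. d k \<ge> 1 \<and> regular_graph {0..<N k} (G k) (d k))"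
  let ?P = "\<lambda>k. measure_pmf.prob (percolation (G k) ((1 - \<epsilon>) / real (d k)))
                 {F. \<forall>v\<in>{0..<N k}. real (card (component F v)) \<le> 9 * ln (real (N k)) / \<epsilon>\<^sup>2}"
  let ?b = "\<lambda>t. (1 + \<epsilon>/2) * t / t powr (9/4)"
  have "filterlim (\<lambda>k. real (N k)) at_top sequentially"
    using G filterlim_compose filterlim_real_sequentially by blast
  moreover have "(?b \<longlongrightarrow> 0) at_top"
    by real_asymp
  ultimately have "(\<lambda>k. ?b (real (N k))) \<longlonglongrightarrow> 0"
    by (rule filterlim_compose[rotated])
  then have "(\<lambda>k. 1 - ?b (real (N k))) \<longlonglongrightarrow> 1"
    using tendsto_diff[OF tendsto_const, of _ 0 _ 1] by simp
  moreover have "\<forall>\<^sub>F k in sequentially. 1 \<le> N k"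
    using G filterlim_at_top by blast
  then have "\<forall>\<^sub>F k in sequentially. 1 - ?b (real (N k)) \<le> ?P k"
    by (rule eventually_mono) (use G e in \<open>simp add: prob_small_components_regular_ge\<close>)
  ultimately show "?P \<longlonglongrightarrow> 1"
    by (intro tendsto_sandwich[of "\<lambda>k. 1 - ?b (real (N k))" ?P _ "\<lambda>_. 1"]) auto
qed simp

end
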